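(* The maximum of $\operatorname{rk}_\perp(A)$ over all real tensors $A\in\mathbb{R}^3\otimes\mathbb{R}^3\otimes\mathbb{R}^3$ equals $7$.
   Context: An $(n_1,\dots,n_d)$-tensor is an $n_1\times\cdots\times n_d$ real array. The Frobenius inner product is $\langle A,A'\rangle_F=\sum a_{i_1\dots i_d}a'_{i_1\dots i_d}$. A rank-one tensor is a nonzero outer product $x^{(1)}\otimes\cdots\otimes x^{(d)}$, whose entries are $x^{(1)}_{i_1}\cdots x^{(d)}_{i_d}$. The orthogonal rank $\operatorname{rk}_\perp(A)$ of a tensor $A$ is the smallest $r$ such that $A=Y_1+\dots+Y_r$ with rank-one tensors $Y_\ell$ satisfying $\langle Y_\ell,Y_{\ell'}\rangle_F=0$ for all $\ell\neq\ell'$. The zero tensor has orthogonal rank $0$. *)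

theory Defs
  imports "HOL-Analysis.Analysis"
begin

type_synonym tensor333 = "real ^ 3 ^ 3 ^ 3"

definition frob_inner :: "tensor333 \<Rightarrow> tensor333 \<Rightarrow> real" where
  "frob_inner A B = (\<Sum>i\<in>UNIV. \<Sum>j\<in>UNIV. \<Sum>k\<in>UNIV. A $ i $ j $ k * B $ i $ j $ k)"

definition rank_one :: "tensor333 \<Rightarrow> bool" where
  "rank_one Y \<longleftrightarrow> Y \<noteq> 0 \<and>
     (\<exists>x y z :: real ^ 3. \<forall>i j k. Y $ i $ j $ k = x $ i * y $ j * z $ k)"

definition orth_decomp :: "tensor333 \<Rightarrow> nat \<Rightarrow> bool" where
  "orth_decomp A r \<longleftrightarrow> (\<exists>Y :: nat \<Rightarrow> tensor333.
      A = (\<Sum>l<r. Y l) \<and> (\<forall>l<r. rank_one (Y l)) \<and>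
      (\<forall>l<r. \<forall>l'<r. l \<noteq> l' \<longrightarrow> frob_inner (Y l) (Y l') = 0))"

definition orth_rank :: "tensor333 \<Rightarrow> nat" where
  "orth_rank A = (LEAST r. orth_decomp A r)"

end

theory Submission
  imports Defs
begin

text \<open>
  Upper bound: write \<open>A(u) = \<Sum>\<^sub>i u\<^sub>i A\<^sub>i\<close> for the slice pencil. For an orthonormal basis
  \<open>q\<^sub>k\<close> and, for each \<open>k\<close>, an orthonormal basis \<open>w\<^sub>k\<^sub>m\<close>, \<open>A\<close> is the sum of the nine
  pairwise orthogonal terms \<open>q\<^sub>k \<otimes> w\<^sub>k\<^sub>m \<otimes> w\<^sub>k\<^sub>m\<^sup>T A(q\<^sub>k)\<close>. Since \<open>u \<mapsto> det A(u)\<close> is odd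
  and continuous, it vanishes somewhere on every great circle; so \<open>q\<^sub>1\<close>, and then \<open>q\<^sub>2 \<bottom> q\<^sub>1\<close>,
  can be chosen with \<open>A(q\<^sub>k)\<close> singular, and taking \<open>w\<^sub>k\<^sub>3\<close> in the left kernel of \<open>A(q\<^sub>k)\<close>
  kills two of the nine terms.

  Lower bound: the tensor \<open>B\<close> below has \<open>\<parallel>B\<parallel>\<^sup>2 = 7\<close>, while by Lagrange's identity
  \<open>\<bar>\<langle>B, x \<otimes> y \<otimes> z\<rangle>\<bar> \<le> \<parallel>x\<parallel> \<parallel>y\<parallel> \<parallel>z\<parallel>\<close>. In an orthogonal decomposition \<open>B = \<Sum>\<^sub>l Y\<^sub>l\<close> one has
  \<open>\<langle>B, Y\<^sub>l\<rangle> = \<parallel>Y\<^sub>l\<parallel>\<^sup>2\<close>, hence \<open>\<parallel>Y\<^sub>l\<parallel> \<le> 1\<close>, and at least seven terms are needed.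
\<close>

lemma frob_inner_eq_inner: "frob_inner A B = A \<bullet> B"
  by (simp add: frob_inner_def inner_vec_def)

definition outer :: "real^3 \<Rightarrow> real^3 \<Rightarrow> real^3 \<Rightarrow> tensor333" where
  "outer x y z = (\<chi> i j k. x$i * y$j * z$k)"

lemma outer_nth [simp]: "outer x y z $ i $ j $ k = x$i * y$j * z$k"
  by (simp add: outer_def)

lemma outer_zero_right [simp]: "outer x y 0 = 0"
  by (simp add: vec_eq_iff)

lemma inner_outer: "outer x y z \<bullet> outer x' y' z' = (x \<bullet> x') * (y \<bullet> y') * (z \<bullet> z')"
  by (simp add: inner_vec_def sum_3 algebra_simps)

lemma norm_outer: "norm (outer x y z) = norm x * norm y * norm z"
  by (simp add: norm_eq_sqrt_inner inner_outer real_sqrt_mult)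

lemma rank_one_iff_outer: "rank_one Y \<longleftrightarrow> Y \<noteq> 0 \<and> (\<exists>x y z. Y = outer x y z)"
  by (auto simp: rank_one_def vec_eq_iff)

lemma orth_decomp_iff:
  "orth_decomp A r \<longleftrightarrow> (\<exists>Y. A = (\<Sum>l<r. Y l) \<and> (\<forall>l<r. rank_one (Y l)) \<and>
      pairwise (\<lambda>l l'. orthogonal (Y l) (Y l')) {..<r})"
  by (simp add: orth_decomp_def pairwise_def orthogonal_def frob_inner_eq_inner Ball_def)

lemma orth_rank_le: "orth_decomp A r \<Longrightarrow> orth_rank A \<le> r"
  unfolding orth_rank_def by (rule Least_le)

lemma orth_decomp_orth_rank: "orth_decomp A r \<Longrightarrow> orth_decomp A (orth_rank A)"
  unfolding orth_rank_def by (rule LeastI)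

lemma orth_decomp_sum_le_card:
  assumes "finite I" and rank: "\<And>i. i \<in> I \<Longrightarrow> Y i = 0 \<or> rank_one (Y i)"
    and orth: "pairwise (\<lambda>i j. orthogonal (Y i) (Y j)) I"
  shows "\<exists>r \<le> card I. orth_decomp (\<Sum>i\<in>I. Y i) r"
proof -
  define J where "J = {i \<in> I. Y i \<noteq> 0}"
  have "finite J" "J \<subseteq> I" using \<open>finite I\<close> by (auto simp: J_def)
  obtain h where h: "bij_betw h {..<card J} J"
    using ex_bij_betw_nat_finite[OF \<open>finite J\<close>] by (auto simp: atLeast0LessThan)
  have "(\<Sum>i\<in>I. Y i) = (\<Sum>i\<in>J. Y i)"
    using \<open>finite I\<close> by (intro sum.mono_neutral_right) (auto simp: J_def)
  also have "\<dots> = (\<Sum>l<card J. Y (h l))"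
    by (rule sum.reindex_bij_betw[OF h, symmetric])
  finally have "orth_decomp (\<Sum>i\<in>I. Y i) (card J)"
    unfolding orth_decomp_iff
  proof (intro exI[of _ "Y \<circ> h"] conjI)
    show "\<forall>l<card J. rank_one ((Y \<circ> h) l)"
      using rank bij_betwE[OF h] by (auto simp: J_def)
    show "pairwise (\<lambda>l l'. orthogonal ((Y \<circ> h) l) ((Y \<circ> h) l')) {..<card J}"
      using orth bij_betw_imp_inj_on[OF h] bij_betwE[OF h] \<open>J \<subseteq> I\<close>
      unfolding pairwise_def inj_on_def by (metis comp_apply subsetD)
  qed simp
  moreover have "card J \<le> card I" using \<open>finite I\<close> \<open>J \<subseteq> I\<close> by (rule card_mono)
  ultimately show ?thesis by blast
qed

lemma norm_orthogonal_sum_le: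
  fixes Y :: "'i \<Rightarrow> 'a::real_inner"
  assumes "finite S" and B: "B = (\<Sum>l\<in>S. Y l)"
    and orth: "pairwise (\<lambda>l l'. orthogonal (Y l) (Y l')) S"
    and bound: "\<And>l. l \<in> S \<Longrightarrow> \<bar>B \<bullet> Y l\<bar> \<le> c * norm (Y l)"
  shows "(norm B)\<^sup>2 \<le> c\<^sup>2 * card S"
proof -
  have "(norm (Y l))\<^sup>2 \<le> c\<^sup>2" if "l \<in> S" for l
  proof -
    have "B \<bullet> Y l = (\<Sum>l'\<in>S. Y l' \<bullet> Y l)" by (simp add: B inner_sum_left)
    also have "\<dots> = Y l \<bullet> Y l"
      using orth \<open>finite S\<close> that
      by (subst sum.remove[of _ l]) (auto simp: pairwise_def orthogonal_def intro!: sum.neutral)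
    finally have "(norm (Y l))\<^sup>2 \<le> c * norm (Y l)"
      using bound[OF that] by (simp add: power2_norm_eq_inner)
    then have "norm (Y l) \<le> \<bar>c\<bar>"
      by (cases "Y l = 0") (auto simp: power2_eq_square)
    then show ?thesis by (simp add: abs_le_square_iff[symmetric])
  qed
  then have "(\<Sum>l\<in>S. (norm (Y l))\<^sup>2) \<le> c\<^sup>2 * card S"
    using sum_mono[of S "\<lambda>l. (norm (Y l))\<^sup>2" "\<lambda>_. c\<^sup>2"] by (simp add: mult.commute)
  then show ?thesis by (simp add: B norm_sum_Pythagorean[OF \<open>finite S\<close> orth])
qed

definition tensor_B :: tensor333 where
  "tensor_B = (\<chi> i j k. if k = 1 then (if i = j then -1 else 0)
       else if k = 2 then (if i = 3 \<and> j = 1 then 1 else if i = 1 \<and> j = 3 then -1 else 0)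
       else (if i = 1 \<and> j = 2 then 1 else if i = 2 \<and> j = 1 then -1 else 0))"

lemma norm_tensor_B: "(norm tensor_B)\<^sup>2 = 7"
  by (simp add: power2_norm_eq_inner inner_vec_def sum_3 tensor_B_def)

lemma inner_tensor_B_outer:
  "tensor_B \<bullet> outer x y z = z \<bullet> vector [- (x \<bullet> y), cross3 x y $ 2, cross3 x y $ 3]"
  by (simp add: tensor_B_def cross3_def inner_vec_def sum_3 algebra_simps)

lemma abs_inner_tensor_B_outer: "\<bar>tensor_B \<bullet> outer x y z\<bar> \<le> norm (outer x y z)"
proof -
  define v :: "real^3" where "v = vector [- (x \<bullet> y), cross3 x y $ 2, cross3 x y $ 3]"
  have "(norm v)\<^sup>2 = (x \<bullet> y)\<^sup>2 + (cross3 x y $ 2)\<^sup>2 + (cross3 x y $ 3)\<^sup>2"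
    unfolding power2_norm_eq_inner
    by (simp add: v_def inner_vec_def sum_3 power2_eq_square algebra_simps)
  also have "\<dots> \<le> (x \<bullet> y)\<^sup>2 + (norm (cross3 x y))\<^sup>2"
    by (simp add: power2_norm_eq_inner inner_vec_def sum_3 flip: power2_eq_square)
  also have "\<dots> = (norm x * norm y)\<^sup>2"
    using norm_cross_dot[of x y] by simp
  finally have "norm v \<le> norm x * norm y"
    by (rule power2_le_imp_le) simp
  then have "\<bar>z \<bullet> v\<bar> \<le> norm z * (norm x * norm y)"
    using Cauchy_Schwarz_ineq2[of z v] by (meson mult_left_mono norm_ge_zero order_trans)
  then show ?thesis by (simp add: inner_tensor_B_outer norm_outer v_def mult_ac)
qed

lemma orth_decomp_tensor_B_ge: "orth_decomp tensor_B r \<Longrightarrow> 7 \<le> r"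
proof -
  assume "orth_decomp tensor_B r"
  then obtain Y where decomp: "tensor_B = (\<Sum>l<r. Y l)" and rank: "\<forall>l<r. rank_one (Y l)"
    and orth: "pairwise (\<lambda>l l'. orthogonal (Y l) (Y l')) {..<r}"
    unfolding orth_decomp_iff by blast
  have "\<bar>tensor_B \<bullet> Y l\<bar> \<le> 1 * norm (Y l)" if "l \<in> {..<r}" for l
    using rank that abs_inner_tensor_B_outer by (auto simp: rank_one_iff_outer)
  then have "(norm tensor_B)\<^sup>2 \<le> 1\<^sup>2 * real (card {..<r})"
    by (intro norm_orthogonal_sum_le[OF _ decomp orth]) auto
  then show "7 \<le> r" by (simp add: norm_tensor_B)
qed

lemma orthogonal_matrix_expansion:
  fixes Q :: "real^'n^'n"
  assumes "orthogonal_matrix Q"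
  shows "(\<Sum>k\<in>UNIV. Q$a$k * (\<Sum>a'\<in>UNIV. Q$a'$k * f a')) = f a"
proof -
  have rows: "(\<Sum>k\<in>UNIV. Q$a$k * Q$a'$k) * f a' = (if a' = a then f a else 0)" for a'
  proof -
    have "(Q ** transpose Q)$a$a' = mat 1 $ a $ a'"
      using assms by (simp add: orthogonal_matrix_def)
    then show ?thesis by (simp add: matrix_matrix_mult_def transpose_def mat_def)
  qed
  have "(\<Sum>k\<in>UNIV. Q$a$k * (\<Sum>a'\<in>UNIV. Q$a'$k * f a'))
      = (\<Sum>a'\<in>UNIV. (\<Sum>k\<in>UNIV. Q$a$k * Q$a'$k) * f a')"
    unfolding sum_distrib_left sum_distrib_right mult.assoc by (rule sum.swap)
  also have "\<dots> = f a" by (simp add: rows)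
  finally show ?thesis .
qed

definition slice :: "tensor333 \<Rightarrow> real^3 \<Rightarrow> real^3^3" where
  "slice A u = (\<chi> j k. \<Sum>i\<in>UNIV. u$i * A$i$j$k)"

definition basis_term :: "tensor333 \<Rightarrow> real^3^3 \<Rightarrow> (3 \<Rightarrow> real^3^3) \<Rightarrow> 3 \<times> 3 \<Rightarrow> tensor333" where
  "basis_term A Q W = (\<lambda>(k, m). outer (column k Q) (column m (W k))
      (column m (W k) v* slice A (column k Q)))"

lemma sum_basis_term:
  assumes Q: "orthogonal_matrix Q" and W: "\<And>k. orthogonal_matrix (W k)"
  shows "(\<Sum>p\<in>UNIV. basis_term A Q W p) = A"
proof -
  have "(\<Sum>p\<in>UNIV. basis_term A Q W p)$a$b$c = A$a$b$c" for a b c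
  proof -
    have "(\<Sum>p\<in>UNIV. basis_term A Q W p)$a$b$c
        = (\<Sum>k\<in>UNIV. \<Sum>m\<in>UNIV. basis_term A Q W (k, m)$a$b$c)"
      by (simp add: sum.cartesian_product' flip: UNIV_Times_UNIV)
    also have "\<dots> = (\<Sum>k\<in>UNIV. Q$a$k * (\<Sum>m\<in>UNIV. W k$b$m *
             (\<Sum>b'\<in>UNIV. W k$b'$m * slice A (column k Q)$b'$c)))"
      by (simp add: basis_term_def column_def vector_matrix_mult_def sum_distrib_left mult.assoc)
    also have "\<dots> = (\<Sum>k\<in>UNIV. Q$a$k * (\<Sum>a'\<in>UNIV. Q$a'$k * A$a'$b$c))"
      by (simp add: orthogonal_matrix_expansion[OF W] slice_def column_def)
    also have "\<dots> = A$a$b$c"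
      by (rule orthogonal_matrix_expansion[OF Q])
    finally show ?thesis .
  qed
  then show ?thesis by (simp add: vec_eq_iff)
qed

lemma basis_term_pairwise_orthogonal:
  assumes Q: "orthogonal_matrix Q" and W: "\<And>k. orthogonal_matrix (W k)"
  shows "pairwise (\<lambda>p p'. orthogonal (basis_term A Q W p) (basis_term A Q W p')) UNIV"
proof (rule pairwiseI)
  fix p p' :: "3 \<times> 3" assume "p \<noteq> p'"
  obtain k m k' m' where p: "p = (k, m)" "p' = (k', m')" by fastforce
  with \<open>p \<noteq> p'\<close> have "column k Q \<bullet> column k' Q = 0 \<or> column m (W k) \<bullet> column m' (W k') = 0"
    using Q W by (cases "k = k'") (auto simp: orthogonal_matrix_orthonormal_columns orthogonal_def)
  then show "orthogonal (basis_term A Q W p) (basis_term A Q W p')"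
    by (auto simp: p basis_term_def inner_outer orthogonal_def)
qed

lemma basis_term_rank_one: "basis_term A Q W p = 0 \<or> rank_one (basis_term A Q W p)"
  by (auto simp: basis_term_def rank_one_iff_outer split: prod.split)

lemma basis_term_eq_0:
  "column m (W k) v* slice A (column k Q) = 0 \<Longrightarrow> basis_term A Q W (k, m) = 0"
  by (simp add: basis_term_def)

lemma singular_matrix_left_kernel:
  fixes M :: "real^'n^'n"
  assumes "det M = 0"
  obtains W where "orthogonal_matrix W" "column k W v* M = 0"
proof -
  have "\<not> (\<exists>B. B ** transpose M = mat 1)"
    using assms invertible_left_inverse[of "transpose M"] by (simp add: invertible_det_nz)
  then obtain x where x: "x v* M = 0" "x \<noteq> 0"
    unfolding matrix_left_invertible_ker by auto
  define u where "u = x /\<^sub>R norm x"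
  have "norm u = 1" using x(2) by (simp add: u_def)
  then obtain W where W: "orthogonal_matrix W" "W *v axis k 1 = u"
    by (rule orthogonal_matrix_exists_basis)
  have "column k W v* M = 0"
    using W(2) x(1) by (simp add: u_def matrix_vector_mult_basis scaleR_vector_matrix_assoc)
  with W(1) show thesis by (rule that)
qed

lemma odd_function_zero_on_circle:
  fixes f :: "'a::real_normed_vector \<Rightarrow> real"
  assumes "continuous_on UNIV f" and odd: "\<And>u. f (- u) = - f u"
  obtains \<theta> where "f (cos \<theta> *\<^sub>R p + sin \<theta> *\<^sub>R q) = 0"
proof -
  define g where "g \<theta> = f (cos \<theta> *\<^sub>R p + sin \<theta> *\<^sub>R q)" for \<theta>
  have cont: "continuous_on {0..pi} g"
    unfolding g_def
    by (rule continuous_on_compose2[OF assms(1)]) (auto intro!: continuous_intros)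
  have "g pi = - g 0" by (simp add: g_def flip: odd)
  then have "g 0 \<le> 0 \<and> 0 \<le> g pi \<or> g pi \<le> 0 \<and> 0 \<le> g 0" by linarith
  then have "\<exists>\<theta>. g \<theta> = 0"
    using IVT'[of g 0 0 pi] IVT2'[of g pi 0 0] cont pi_ge_zero by blast
  then show thesis unfolding g_def using that by blast
qed

definition rotation_z :: "real \<Rightarrow> real^3^3" where
  "rotation_z \<alpha> = vector [vector [cos \<alpha>, - sin \<alpha>, 0], vector [sin \<alpha>, cos \<alpha>, 0], vector [0, 0, 1]]"

definition rotation_x :: "real \<Rightarrow> real^3^3" where
  "rotation_x \<beta> = vector [vector [1, 0, 0], vector [0, cos \<beta>, - sin \<beta>], vector [0, sin \<beta>, cos \<beta>]]"

lemma orthogonal_matrix_rotation_z: "orthogonal_matrix (rotation_z \<alpha>)"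
  by (simp add: orthogonal_matrix vec_eq_iff forall_3 matrix_matrix_mult_def transpose_def
      mat_def sum_3 rotation_z_def)

lemma orthogonal_matrix_rotation_x: "orthogonal_matrix (rotation_x \<beta>)"
  by (simp add: orthogonal_matrix vec_eq_iff forall_3 matrix_matrix_mult_def transpose_def
      mat_def sum_3 rotation_x_def)

lemma column_rotation_zx:
  "column 1 (rotation_z \<alpha> ** rotation_x \<beta>) = cos \<alpha> *\<^sub>R axis 1 1 + sin \<alpha> *\<^sub>R axis 2 1"
  "column 2 (rotation_z \<alpha> ** rotation_x \<beta>) =
     cos \<beta> *\<^sub>R (- sin \<alpha> *\<^sub>R axis 1 1 + cos \<alpha> *\<^sub>R axis 2 1) + sin \<beta> *\<^sub>R axis 3 1"
  by (simp_all add: vec_eq_iff forall_3 column_def matrix_matrix_mult_def sum_3 axis_def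
      rotation_z_def rotation_x_def)

lemma orthogonal_matrix_two_column_zeros:
  fixes f :: "real^3 \<Rightarrow> real"
  assumes "continuous_on UNIV f" and "\<And>u. f (- u) = - f u"
  obtains Q where "orthogonal_matrix Q" "f (column 1 Q) = 0" "f (column 2 Q) = 0"
proof -
  obtain \<alpha> where \<alpha>: "f (cos \<alpha> *\<^sub>R axis 1 1 + sin \<alpha> *\<^sub>R axis 2 1) = 0"
    using odd_function_zero_on_circle[OF assms] .
  obtain \<beta> where \<beta>:
    "f (cos \<beta> *\<^sub>R (- sin \<alpha> *\<^sub>R axis 1 1 + cos \<alpha> *\<^sub>R axis 2 1) + sin \<beta> *\<^sub>R axis 3 1) = 0"
    using odd_function_zero_on_circle[OF assms] .
  show thesis
    using \<alpha> \<beta> orthogonal_matrix_mul[OF orthogonal_matrix_rotation_z orthogonal_matrix_rotation_x]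
    by (intro that[of "rotation_z \<alpha> ** rotation_x \<beta>"]) (simp_all add: column_rotation_zx)
qed

lemma continuous_on_det_slice: "continuous_on UNIV (\<lambda>u. det (slice A u))"
  unfolding det_3 by (auto simp: slice_def intro!: continuous_intros)

lemma det_slice_uminus: "det (slice A (- u)) = - det (slice A u)"
  by (simp add: det_3 slice_def sum_negf algebra_simps)

lemma orth_decomp_le_7: "\<exists>r \<le> 7. orth_decomp A r"
proof -
  obtain Q where Q: "orthogonal_matrix Q"
    and singular: "det (slice A (column 1 Q)) = 0" "det (slice A (column 2 Q)) = 0"
    using orthogonal_matrix_two_column_zeros[OF continuous_on_det_slice det_slice_uminus] .
  obtain W1 W2 :: "real^3^3"
    where W1: "orthogonal_matrix W1" "column 3 W1 v* slice A (column 1 Q) = 0"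
      and W2: "orthogonal_matrix W2" "column 3 W2 v* slice A (column 2 Q) = 0"
    using singular_matrix_left_kernel[OF singular(1)] singular_matrix_left_kernel[OF singular(2)]
    by metis
  define W where "W k = (if k = 1 then W1 else if k = 2 then W2 else mat 1)" for k :: 3
  have W: "orthogonal_matrix (W k)" for k
    by (simp add: W_def W1 W2 orthogonal_matrix_id)
  define I :: "(3 \<times> 3) set" where "I = UNIV - {(1, 3), (2, 3)}"
  have "A = (\<Sum>p\<in>UNIV. basis_term A Q W p)"
    by (simp add: sum_basis_term[OF Q W])
  also have "\<dots> = (\<Sum>p\<in>I. basis_term A Q W p)"
    by (rule sum.mono_neutral_right) (auto simp: I_def W_def W1 W2 basis_term_eq_0)
  finally have "\<exists>r \<le> card I. orth_decomp A r"
    using orth_decomp_sum_le_card[of I "basis_term A Q W"] basis_term_rank_one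
      pairwise_subset[OF basis_term_pairwise_orthogonal[OF Q W]] by simp
  moreover have "card I = 7" by (simp add: I_def card_Diff_subset)
  ultimately show ?thesis by simp
qed

theorem theorem1p4:
  shows "(\<forall>A :: tensor333. orth_rank A \<le> 7) \<and> (\<exists>A :: tensor333. orth_rank A = 7)"
proof -
  have le_7: "orth_rank A \<le> 7" for A
    using orth_decomp_le_7[of A] orth_rank_le by fastforce
  obtain r where "orth_decomp tensor_B r" using orth_decomp_le_7 by blast
  then have "7 \<le> orth_rank tensor_B" by (intro orth_decomp_tensor_B_ge orth_decomp_orth_rank)
  with le_7 show ?thesis by (meson order_antisym)
qed

end
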